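(* Let $0<q<1/2$, $p=1-q$, $\lambda=q/p$, $c(x)=x-1-\log x$ for $x>0$, and for integers $z\ge1$ let $$P_{SN}(z)=1-\sum_{k=0}^{z-1}e^{-zq/p}\frac{(zq/p)^k}{k!}\left(1-\left(\frac qp\right)^{z-k}\right).$$ Then as $z\to+\infty$, $$P_{SN}(z)\sim\frac{e^{-zc(\lambda)}}{2}.$$
   Context: $P_{SN}(z)$ is Nakamoto's approximation of the probability of success of a double-spend attack by attackers with relative hash power $q$ after $z$ confirmations. Note $c(\lambda)>0$ for $\lambda\neq1$. *)

theory Defs
  imports "HOL-Analysis.Analysis" "HOL-Library.Landau_Symbols"
begin

definition c_fun :: "real \<Rightarrow> real" where
  "c_fun x = x - 1 - ln x"

definition P_SN :: "real \<Rightarrow> nat \<Rightarrow> real" where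
  "P_SN q z = 1 - (\<Sum>k<z. exp (- real z * q / (1 - q)) * (real z * q / (1 - q)) ^ k / fact k
                     * (1 - (q / (1 - q)) ^ (z - k)))"

end

theory Submission
  imports Defs "HOL-Probability.Probability"
begin

text \<open>
  Write \<open>\<lambda> = q/p\<close>, \<open>a = z\<lambda>\<close> and \<open>S_z(x) = \<Sum>_{k<z} x^k/k!\<close>. Splitting the
  factor \<open>1 - \<lambda>^(z-k)\<close>, the probability becomes \<open>(1 - e^-a S_z(a)) + e^-a \<lambda>^z S_z(z)\<close>,
  while \<open>e^(-z c(\<lambda>)) = e^-a e^z \<lambda>^z\<close>. Relative to \<open>e^(-z c(\<lambda>))\<close> the second summand is
  \<open>e^-z S_z(z)\<close>, the probability that a sum of \<open>z\<close> independent standard exponential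
  variables exceeds \<open>z\<close>; the central limit theorem sends it to \<open>1/2\<close>. The first summand is
  the Poisson tail beyond \<open>z\<close> at mean \<open>a < z\<close>; it is dominated by a geometric series of
  ratio \<open>\<lambda>\<close>, so relative to \<open>e^(-z c(\<lambda>))\<close> it is at most \<open>z^z e^-z / (z! (1 - \<lambda>))\<close>.
  This tends to \<open>0\<close> because the \<open>\<surd>z / 2\<close> Poisson weights \<open>z^(z-j) e^-z / (z-j)!\<close> just
  below the mean are each at least \<open>3/4\<close> of the central one, and together at most \<open>1\<close>.
\<close>

lemma cdf_std_normal_zero: "cdf std_normal_distribution 0 = 1/2"
  and isCont_cdf_std_normal_zero: "isCont (cdf std_normal_distribution) 0"
proof -
  interpret N: real_distribution std_normal_distribution by (rule real_dist_normal_dist)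
  let ?f = "\<lambda>x. ennreal (std_normal_density x)"
  have even: "std_normal_density (- x) = std_normal_density x" for x
    by (simp add: std_normal_density_def)
  have "emeasure std_normal_distribution {..0} = (\<integral>\<^sup>+x. ?f x * indicator {..0} x \<partial>lborel)"
    by (rule emeasure_density) auto
  also have "\<dots> = (\<integral>\<^sup>+x. ?f (0 + (-1) * x) * indicator {..0} (0 + (-1) * x) \<partial>lborel)"
    by (subst nn_integral_real_affine[of _ "-1" 0]) auto
  also have "\<dots> = (\<integral>\<^sup>+x. ?f x * indicator {0..} x \<partial>lborel)"
    by (intro nn_integral_cong) (auto simp: even split: split_indicator)
  also have "\<dots> = emeasure std_normal_distribution {0..}"
    by (rule emeasure_density[symmetric]) auto
  finally have halves_eq: "N.prob {..0} = N.prob {0..}"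
    by (simp add: measure_def)
  have "emeasure std_normal_distribution {0} = (\<integral>\<^sup>+x. ?f x * indicator {0} x \<partial>lborel)"
    by (rule emeasure_density) auto
  also have "\<dots> = 0"
    by (rule nn_integral_null_set[of "{0}", THEN trans])
      (auto intro: nn_integral_cong simp: indicator_def)
  finally have no_atom: "N.prob {0} = 0"
    by (simp add: measure_def)
  have "N.prob {0..} = N.prob ({0} \<union> {0<..})"
    by (intro arg_cong[where f = N.prob]) auto
  also have "\<dots> = N.prob {0<..}"
    using no_atom by (subst N.finite_measure_Union) auto
  finally have right_eq: "N.prob {0..} = N.prob {0<..}" .
  have "N.prob {..0} + N.prob {0<..} = N.prob ({..0} \<union> {0<..})"
    by (rule N.finite_measure_Union[symmetric]) auto
  also have "{..0} \<union> {0<..} = (UNIV :: real set)"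
    by auto
  finally show "cdf std_normal_distribution 0 = 1/2"
    using halves_eq right_eq N.prob_space by (simp add: cdf_def)
  show "isCont (cdf std_normal_distribution) 0"
    using no_atom N.isCont_cdf by simp
qed

lemma iid_exponential_sequence:
  fixes l :: real
  assumes "0 < l"
  obtains M :: "(nat \<Rightarrow> real) measure" and X :: "nat \<Rightarrow> (nat \<Rightarrow> real) \<Rightarrow> real"
  where "prob_space M" "prob_space.indep_vars M (\<lambda>_. borel) X UNIV"
    "\<And>i. distributed M lborel (X i) (exponential_density l)"
proof -
  define E where "E = density lborel (exponential_density l)"
  define M where "M = Pi\<^sub>M (UNIV :: nat set) (\<lambda>_. E)"
  define X where "X = (\<lambda>i (\<omega> :: nat \<Rightarrow> real). \<omega> i)"
  have "prob_space E"
    unfolding E_def using assms by (rule prob_space_exponential_density)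
  then have "prob_space M"
    unfolding M_def by (rule prob_space_PiM)
  then interpret prob_space M .
  have sets_E: "sets E = sets borel"
    unfolding E_def by simp
  have X_measurable: "X i \<in> measurable M E" for i
    unfolding M_def X_def by (rule measurable_component_singleton) simp
  have distr_X: "distr M E (X i) = E" for i
    unfolding M_def X_def by (rule distr_PiM_component) (auto simp: \<open>prob_space E\<close>)
  have "indep_vars (\<lambda>_. E) X UNIV"
  proof (subst indep_vars_iff_distr_eq_PiM)
    have "(\<lambda>x. \<lambda>i\<in>UNIV. X i x) = (\<lambda>x. x)"
      by (auto simp: X_def restrict_def)
    then show "distr M (Pi\<^sub>M UNIV (\<lambda>_. E)) (\<lambda>x. \<lambda>i\<in>UNIV. X i x) = Pi\<^sub>M UNIV (\<lambda>i. distr M E (X i))"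
      unfolding distr_X M_def[symmetric] using distr_id by simp
  qed (auto simp: X_measurable)
  then have "indep_vars (\<lambda>_. borel) X UNIV"
    unfolding indep_vars_def2 using sets_E measurable_cong_sets[OF refl sets_E, of M] by simp
  moreover have "distributed M lborel (X i) (exponential_density l)" for i
  proof -
    have "distr M lborel (X i) = distr M E (X i)"
      by (rule distr_cong) (auto simp: sets_E)
    then show ?thesis
      unfolding distributed_def using distr_X[of i] X_measurable[of i] measurable_cong_sets[OF refl sets_E]
      by (simp add: E_def)
  qed
  ultimately show ?thesis
    using that \<open>prob_space M\<close> by blast
qed

lemma exp_neg_times_exp_partial_sum_tendsto_half:
  "(\<lambda>n. exp (- real n) * (\<Sum>k<n. real n ^ k / fact k)) \<longlonglongrightarrow> 1/2"
proof -
  obtain M :: "(nat \<Rightarrow> real) measure" and X :: "nat \<Rightarrow> (nat \<Rightarrow> real) \<Rightarrow> real"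
    where "prob_space M" and indep: "prob_space.indep_vars M (\<lambda>_. borel) X UNIV"
      and exp_distributed: "\<And>i. distributed M lborel (X i) (exponential_density 1)"
    using iid_exponential_sequence[of 1] by auto
  interpret prob_space M by fact
  have [measurable]: "X i \<in> borel_measurable M" for i
    using exp_distributed[of i] by (auto simp: distributed_def)
  define Z where "Z n x = (\<Sum>i<n. X i x - 1) / sqrt (real n * 1\<^sup>2)" for n x
  have "weak_conv_m (\<lambda>n. distr M borel (Z n)) std_normal_distribution"
    unfolding Z_def
  proof (rule central_limit_theorem[where \<mu> = "density lborel (exponential_density 1)" and \<sigma> = 1])
    show "expectation (X n) = 1" for n
      using exponential_distributed_expectation[OF _ exp_distributed] by simp
    show "integrable M (\<lambda>x. (X n x)\<^sup>2)" for n
      using erlang_ith_moment_integrable[OF _ exp_distributed, of n 2] by simp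
    show "variance (X n) = 1\<^sup>2" for n
      using exponential_distributed_variance[OF _ exp_distributed] by simp
    show "distr M borel (X n) = density lborel (exponential_density 1)" for n
    proof -
      have "distr M borel (X n) = distr M lborel (X n)"
        by (rule distr_cong) auto
      then show ?thesis
        using distributed_distr_eq_density[OF exp_distributed[of n]] by simp
    qed
  qed (use indep in simp_all)
  then have "(\<lambda>n. cdf (distr M borel (Z n)) 0) \<longlonglongrightarrow> cdf std_normal_distribution 0"
    using isCont_cdf_std_normal_zero unfolding weak_conv_m_def weak_conv_def by blast
  then have "(\<lambda>n. 1 - cdf (distr M borel (Z n)) 0) \<longlonglongrightarrow> 1 - 1/2"
    unfolding cdf_std_normal_zero by (rule tendsto_diff[OF tendsto_const])
  moreover have "1 - cdf (distr M borel (Z n)) 0 = exp (- real n) * (\<Sum>k<n. real n ^ k / fact k)"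
    if "n \<ge> 1" for n
  proof -
    have "cdf (distr M borel (Z n)) 0 = prob {x \<in> space M. Z n x \<le> 0}"
      unfolding cdf_def Z_def by (subst measure_distr) (auto intro!: arg_cong[where f = prob])
    also have "\<dots> = \<P>(x in M. (\<Sum>i\<in>{..<n}. X i x) \<le> real n)"
      using that by (intro arg_cong[where f = prob]) (auto simp: Z_def sum_subtractf divide_le_0_iff)
    also have "\<dots> = erlang_CDF (card {..<n} - 1) 1 (real n)"
      using that exp_distributed indep
      by (intro erlang_distributed_le exponential_distributed_sum)
        (auto intro: indep_vars_subset simp: lessThan_empty_iff)
    also have "\<dots> = 1 - exp (- real n) * (\<Sum>k<n. real n ^ k / fact k)"
      using that by (simp add: erlang_CDF_def sum_distrib_left mult.commute lessThan_Suc_atMost[symmetric])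
    finally show ?thesis
      by simp
  qed
  then have "\<forall>\<^sub>F n in sequentially.
      1 - cdf (distr M borel (Z n)) 0 = exp (- real n) * (\<Sum>k<n. real n ^ k / fact k)"
    by (rule eventually_sequentiallyI)
  ultimately show ?thesis
    by (simp add: Lim_transform_eventually)
qed

lemma exp_partial_sum_le_exp:
  fixes x :: real
  assumes "0 \<le> x"
  shows "(\<Sum>k<n. x ^ k / fact k) \<le> exp x"
proof -
  have "(\<lambda>k. x ^ k / fact k) sums exp x"
    using exp_converges[of x] by (simp add: divide_inverse mult.commute)
  then have "(\<Sum>k<n. x ^ k / fact k) \<le> (\<Sum>k. x ^ k / fact k)"
    using assms by (intro sum_le_suminf) (auto simp: sums_iff)
  also have "\<dots> = exp x"
    using \<open>(\<lambda>k. x ^ k / fact k) sums exp x\<close> by (simp add: sums_iff)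
  finally show ?thesis .
qed

lemma fact_mult_power_le_fact_add: "fact n * n ^ j \<le> (fact (n + j) :: nat)"
proof (induction j)
  case (Suc j)
  have "fact n * n ^ Suc j = n * (fact n * n ^ j)"
    by simp
  also have "\<dots> \<le> (n + j + 1) * fact (n + j)"
    using Suc by (intro mult_mono) auto
  finally show ?case
    by simp
qed simp

lemma exp_minus_partial_sum_le:
  fixes a :: real
  assumes "0 \<le> a" "a < real n"
  shows "exp a - (\<Sum>k<n. a ^ k / fact k) \<le> a ^ n / fact n / (1 - a / n)"
proof -
  have "(\<lambda>k. a ^ k / fact k) sums exp a"
    using exp_converges[of a] by (simp add: divide_inverse mult.commute)
  then have tail: "(\<lambda>j. a ^ (j + n) / fact (j + n)) sums (exp a - (\<Sum>k<n. a ^ k / fact k))"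
    using sums_iff_shift[of "\<lambda>k. a ^ k / fact k" n] by simp
  have "n > 0"
    using assms by simp
  then have geometric: "(\<lambda>j. a ^ n / fact n * (a / n) ^ j) sums (a ^ n / fact n * (1 / (1 - a / n)))"
    using assms by (intro sums_mult geometric_sums) simp
  have "a ^ (j + n) / fact (j + n) \<le> a ^ n / fact n * (a / n) ^ j" for j
  proof -
    have "real (fact n * n ^ j) \<le> real (fact (n + j))"
      using fact_mult_power_le_fact_add[of n j] by linarith
    then have "a ^ n * a ^ j / fact (n + j) \<le> a ^ n * a ^ j / (fact n * real n ^ j)"
      using \<open>n > 0\<close> assms by (intro divide_left_mono) (auto simp: of_nat_mult)
    moreover have "a ^ (j + n) / fact (j + n) = a ^ n * a ^ j / fact (n + j)"
      by (simp add: power_add add.commute)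
    ultimately show ?thesis
      by (simp add: power_divide)
  qed
  then show ?thesis
    using sums_le[OF _ tail geometric] by simp
qed

lemma power_div_fact_pred:
  fixes x :: real
  assumes "x \<noteq> 0" "0 < k"
  shows "x ^ (k - 1) / fact (k - 1) = x ^ k / fact k * (k / x)"
proof -
  obtain m where "k = Suc m"
    using assms gr0_conv_Suc by blast
  then show ?thesis
    using assms by (simp add: field_simps del: of_nat_Suc)
qed

lemma power_div_fact_diff:
  assumes "j \<le> n"
  shows "real n ^ (n - j) / fact (n - j) = real n ^ n / fact n * (\<Prod>i<j. 1 - real i / n)"
  using assms
proof (induction j)
  case (Suc j)
  have "j < n"
    using Suc.prems by simp
  have "n - Suc j = n - j - 1"
    by simp
  then have "real n ^ (n - Suc j) / fact (n - Suc j) = real n ^ (n - j) / fact (n - j) * (real (n - j) / n)"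
    using \<open>j < n\<close> by (simp only:) (rule power_div_fact_pred; simp)
  also have "real (n - j) / n = 1 - real j / n"
    using \<open>j < n\<close> by (simp add: of_nat_diff field_simps)
  finally show ?case
    using Suc.IH \<open>j < n\<close> by (simp only: prod.lessThan_Suc mult.assoc less_imp_le)
qed simp

lemma power_self_div_fact_exp_le:
  fixes n m :: nat
  assumes "0 < n" "4 * real m ^ 2 \<le> real n"
  shows "real n ^ n / fact n * exp (- real n) \<le> 4 / (3 * (real m + 1))"
proof -
  let ?T = "\<lambda>k. real n ^ k / fact k"
  have "real m \<le> real m ^ 2"
    by (cases m) (auto simp: power2_eq_square)
  then have "real m \<le> real n"
    using assms by linarith
  then have "m \<le> n"
    by simp
  have near_center: "?T n * (3/4) \<le> ?T (n - j)" if "j \<le> m" for j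
  proof -
    have "(\<Sum>i<j. real i / n) \<le> real (card {..<j}) * (real j / n)"
      by (rule sum_bounded_above) (simp add: divide_right_mono)
    also have "\<dots> \<le> 1/4"
    proof -
      have "real j ^ 2 \<le> real m ^ 2"
        using that by (simp add: power_mono)
      then show ?thesis
        using assms by (simp add: power2_eq_square field_simps)
    qed
    finally have "3/4 \<le> 1 - (\<Sum>i<j. real i / n)"
      by simp
    also have "\<dots> \<le> (\<Prod>i<j. 1 - real i / n)"
      using that \<open>m \<le> n\<close> by (intro Weierstrass_prod_ineq) auto
    finally have "?T n * (3/4) \<le> ?T n * (\<Prod>i<j. 1 - real i / n)"
      by (rule mult_left_mono) simp
    then show ?thesis
      using power_div_fact_diff[of j n] that \<open>m \<le> n\<close> by simp
  qed
  have "(real m + 1) * (?T n * (3/4)) = (\<Sum>j\<le>m. ?T n * (3/4))"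
    by simp
  also have "\<dots> \<le> (\<Sum>j\<le>m. ?T (n - j))"
    by (intro sum_mono near_center) simp
  also have "\<dots> = (\<Sum>k\<in>(\<lambda>j. n - j) ` {..m}. ?T k)"
    using \<open>m \<le> n\<close> by (subst sum.reindex) (auto simp: inj_on_def)
  also have "\<dots> \<le> (\<Sum>k<Suc n. ?T k)"
    by (rule sum_mono2) auto
  also have "\<dots> \<le> exp (real n)"
    by (rule exp_partial_sum_le_exp) simp
  finally show ?thesis
    by (simp add: exp_minus field_simps)
qed

lemma power_self_div_fact_exp_tendsto_0: "(\<lambda>n. real n ^ n / fact n * exp (- real n)) \<longlonglongrightarrow> 0"
proof (rule LIMSEQ_I)
  fix \<epsilon> :: real
  assume "0 < \<epsilon>"
  obtain m :: nat where "4 / (3 * \<epsilon>) < real m"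
    using reals_Archimedean2 by blast
  then have "4 / (3 * (real m + 1)) < \<epsilon>"
    using \<open>0 < \<epsilon>\<close> by (simp add: field_simps)
  moreover have "real n ^ n / fact n * exp (- real n) \<le> 4 / (3 * (real m + 1))"
    if "Suc (4 * m ^ 2) \<le> n" for n
    using that by (intro power_self_div_fact_exp_le) (auto simp flip: of_nat_power)
  ultimately show "\<exists>N. \<forall>n\<ge>N. norm (real n ^ n / fact n * exp (- real n) - 0) < \<epsilon>"
    by force
qed

lemma exp_neg_mult_c_fun:
  assumes "0 < l"
  shows "exp (- real z * c_fun l) = exp (- (real z * l)) * exp (real z) * l ^ z"
proof -
  have "l ^ z = exp (real z * ln l)"
    using assms by (simp add: exp_of_nat_mult exp_ln)
  then show ?thesis
    by (simp add: c_fun_def algebra_simps exp_add exp_diff exp_minus divide_inverse)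
qed

lemma P_SN_eq:
  fixes q :: real and z :: nat
  defines "l \<equiv> q / (1 - q)"
  shows "P_SN q z = (1 - exp (- (real z * l)) * (\<Sum>k<z. (real z * l) ^ k / fact k))
    + exp (- (real z * l)) * l ^ z * (\<Sum>k<z. real z ^ k / fact k)"
proof -
  have "(real z * l) ^ k * l ^ (z - k) = l ^ z * real z ^ k" if "k < z" for k
    using that by (simp add: power_mult_distrib power_add[symmetric])
  then have "(\<Sum>k<z. exp (- (real z * l)) * (real z * l) ^ k / fact k * (1 - l ^ (z - k)))
      = (\<Sum>k<z. exp (- (real z * l)) * ((real z * l) ^ k / fact k)
          - exp (- (real z * l)) * l ^ z * (real z ^ k / fact k))"
    by (intro sum.cong) (simp_all add: field_simps)
  then show ?thesis
    by (simp add: P_SN_def l_def sum_subtractf sum_distrib_left)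
qed

lemma poisson_upper_tail_bounds:
  fixes a :: real
  assumes "0 \<le> a" "a < real n"
  shows "0 \<le> 1 - exp (- a) * (\<Sum>k<n. a ^ k / fact k)"
    and "1 - exp (- a) * (\<Sum>k<n. a ^ k / fact k) \<le> exp (- a) * (a ^ n / fact n / (1 - a / n))"
proof -
  have tail_eq: "1 - exp (- a) * (\<Sum>k<n. a ^ k / fact k) = exp (- a) * (exp a - (\<Sum>k<n. a ^ k / fact k))"
    by (simp add: algebra_simps exp_minus)
  then show "0 \<le> 1 - exp (- a) * (\<Sum>k<n. a ^ k / fact k)"
    using exp_partial_sum_le_exp[OF assms(1)] by simp
  show "1 - exp (- a) * (\<Sum>k<n. a ^ k / fact k) \<le> exp (- a) * (a ^ n / fact n / (1 - a / n))"
    unfolding tail_eq using exp_minus_partial_sum_le[OF assms] by (rule mult_left_mono) simp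
qed

lemma poisson_upper_tail_ratio_tendsto_0:
  assumes "0 < l" "l < 1"
  shows "(\<lambda>z. (1 - exp (- (real z * l)) * (\<Sum>k<z. (real z * l) ^ k / fact k)) / exp (- real z * c_fun l))
    \<longlonglongrightarrow> 0"
proof -
  define tail where "tail z = 1 - exp (- (real z * l)) * (\<Sum>k<z. (real z * l) ^ k / fact k)" for z
  define bound where "bound z = real z ^ z / fact z * exp (- real z) / (1 - l)" for z
  have tail_bounds: "0 \<le> tail z \<and> tail z \<le> bound z * exp (- real z * c_fun l)" if "0 < z" for z
  proof -
    have mean_bounds: "0 \<le> real z * l" "real z * l < real z"
      using that assms by simp_all
    have "0 \<le> tail z"
      unfolding tail_def using mean_bounds by (rule poisson_upper_tail_bounds(1))
    have "tail z \<le> exp (- (real z * l)) * ((real z * l) ^ z / fact z / (1 - real z * l / z))"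
      unfolding tail_def using mean_bounds by (rule poisson_upper_tail_bounds(2))
    also have "\<dots> = exp (- (real z * l)) * (real z ^ z * l ^ z / fact z / (1 - l))"
      using that by (simp add: power_mult_distrib)
    also have "\<dots> = bound z * (exp (- (real z * l)) * exp (real z) * l ^ z)"
      unfolding bound_def by (simp add: exp_minus divide_inverse ac_simps)
    also have "\<dots> = bound z * exp (- real z * c_fun l)"
      by (simp only: exp_neg_mult_c_fun[OF \<open>0 < l\<close>])
    finally show ?thesis
      using \<open>0 \<le> tail z\<close> by simp
  qed
  show ?thesis
    unfolding tail_def[symmetric]
  proof (rule tendsto_sandwich[where f = "\<lambda>_. 0" and h = bound])
    show "\<forall>\<^sub>F z in sequentially. 0 \<le> tail z / exp (- real z * c_fun l)"
      using tail_bounds by (intro eventually_sequentiallyI[of 1]) simp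
    show "\<forall>\<^sub>F z in sequentially. tail z / exp (- real z * c_fun l) \<le> bound z"
      using tail_bounds by (intro eventually_sequentiallyI[of 1]) (simp add: pos_divide_le_eq)
    show "bound \<longlonglongrightarrow> 0"
      unfolding bound_def using tendsto_divide_zero[OF power_self_div_fact_exp_tendsto_0] by simp
  qed simp
qed

theorem mainTheorem8:
  fixes q :: real
  assumes "0 < q" and "q < 1/2"
  shows "(\<lambda>z::nat. P_SN q z) \<sim>[at_top] (\<lambda>z. exp (- real z * c_fun (q / (1 - q))) / 2)"
proof (rule asymp_equivI')
  define l where "l = q / (1 - q)"
  have "0 < l" "l < 1"
    using assms by (auto simp: l_def field_simps)
  define tail_ratio where "tail_ratio z =
    (1 - exp (- (real z * l)) * (\<Sum>k<z. (real z * l) ^ k / fact k)) / exp (- real z * c_fun l)" for z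
  have "P_SN q z / (exp (- real z * c_fun l) / 2)
      = 2 * tail_ratio z + 2 * (exp (- real z) * (\<Sum>k<z. real z ^ k / fact k))" for z
    using \<open>0 < l\<close> unfolding tail_ratio_def P_SN_eq[of q z, folded l_def]
      exp_neg_mult_c_fun[OF \<open>0 < l\<close>] exp_minus[of "real z"]
    by (simp add: field_simps)
  moreover have "(\<lambda>z. 2 * tail_ratio z + 2 * (exp (- real z) * (\<Sum>k<z. real z ^ k / fact k)))
      \<longlonglongrightarrow> 2 * 0 + 2 * (1/2)"
    unfolding tail_ratio_def using \<open>0 < l\<close> \<open>l < 1\<close>
    by (intro tendsto_intros poisson_upper_tail_ratio_tendsto_0 exp_neg_times_exp_partial_sum_tendsto_half)
  ultimately show "(\<lambda>z. P_SN q z / (exp (- real z * c_fun (q / (1 - q))) / 2)) \<longlonglongrightarrow> 1"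
    by (simp add: l_def)
qed

end
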